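(* Let $(X,d)$ be a complete cone metric space (in the setting described in the context). Let $L:E\to E$ be a positive linear operator, $\delta\in\mathcal{K}_+(E)$, and let $T:X\to B(X)$ be a $(\delta,L)$-weak contraction, i.e. $H(Tx,Ty)\preceq\delta\,d(x,y)+L\,d(y,Tx)$ for all $x,y\in X$, which satisfies condition (S). Suppose that the function $\varphi_T(x)=d(x,Tx)$ belongs to $\mathcal{LS}(X)$. Then there exists $x^*\in X$ with $x^*\in Tx^*$.
   Context: Let $E$ be a real topological vector space with zero element $\theta$, and $P\subseteq E$ a cone, i.e. a nonempty closed subset with $P\cap(-P)=\{\theta\}$ and $\lambda P+P\subseteq P$ for all $\lambda\ge 0$. Write $x\preceq y$ iff $y-x\in P$; $x\ll y$ iff $y-x\in\mathrm{int}(P)$. Standing assumptions: $E$ with this order is a Riesz space (every pair has an infimum) and is $\sigma$-order complete (every decreasing sequence bounded from below has an infimum). A cone metric space is a pair $(X,d)$ with $X$ nonempty and $d:X\times X\to E$ such that $d(x,y)=\theta$ iff $x=y$, and $d(x,y)\preceq d(x,z)+d(y,z)$ for all $x,y,z$. A sequence $(x_n)$ converges to $x$ iff for every $\epsilon\gg\theta$ there is $N$ with $d(x_n,x)\ll\epsilon$ for $n\ge N$; it is Cauchy iff for every $\epsilon\gg\theta$ there is $N$ with $d(x_m,x_n)\ll\epsilon$ for $m,n\ge N$; $X$ is complete iff every Cauchy sequence converges. A set $F\subseteq X$ is closed iff limits of convergent sequences in $F$ lie in $F$. $\varphi:X\to E$ is lower semicontinuous iff $\{x:\varphi(x)\preceq\alpha\}$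 is closed for every $\alpha\in E$, and bounded below iff some $b\in E$ satisfies $b\preceq\varphi(x)$ for all $x$; $\mathcal{LS}(X)$ is the set of lower semicontinuous, bounded below functions $X\to E$. $B(X)$ is the family of nonempty bounded subsets of $X$. For $x\in X$ and nonempty $A\subseteq X$, $d(x,A)=\inf_{y\in A}d(x,y)$, and for $A,B\in B(X)$, $H(A,B)=\sup\{\sup_{x\in A}d(x,B),\sup_{y\in B}d(y,A)\}$ (infima and suprema in the order $\preceq$, assumed to exist). A linear operator $L:E\to E$ is positive if $LP\subseteq P$. $\mathcal{K}_+(E)$ is the set of all positive, injective, continuous linear operators $\delta:E\to E$ for which there exists $0\le t<1$ with $\theta\preceq\delta x\preceq tx$ for all $x\in P$. A selector of $T$ is a function $f:X\to X$ with $f(x)\in Tx$ for all $x$. $T$ satisfies condition (S) if for every $\epsilon>0$ there is a selector $f_\epsilon$ of $T$ with $d(x,f_\epsilon(x))\preceq(1+\epsilon)d(x,Tx)$ for all $x\in X$. *)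

theory Defs
  imports "HOL-Analysis.Analysis"
begin

definition cle :: "'e::real_vector set \<Rightarrow> 'e \<Rightarrow> 'e \<Rightarrow> bool" where
  "cle P x y \<longleftrightarrow> y - x \<in> P"

definition cll :: "'e::{real_vector,topological_space} set \<Rightarrow> 'e \<Rightarrow> 'e \<Rightarrow> bool" where
  "cll P x y \<longleftrightarrow> y - x \<in> interior P"

definition tvs :: "'e::{real_vector,topological_space} itself \<Rightarrow> bool" where
  "tvs _ \<longleftrightarrow> continuous_on UNIV (\<lambda>p::'e \<times> 'e. fst p + snd p)
     \<and> continuous_on UNIV (\<lambda>p::real \<times> 'e. fst p *\<^sub>R snd p)"

definition is_cone :: "'e::{real_vector,topological_space} set \<Rightarrow> bool" where
  "is_cone P \<longleftrightarrow> P \<noteq> {} \<and> closed P \<and> P \<inter> uminus ` P = {0}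
     \<and> (\<forall>l::real. l \<ge> 0 \<longrightarrow> (\<forall>x\<in>P. \<forall>y\<in>P. l *\<^sub>R x + y \<in> P))"

definition is_glb :: "'e::real_vector set \<Rightarrow> 'e set \<Rightarrow> 'e \<Rightarrow> bool" where
  "is_glb P S z \<longleftrightarrow> (\<forall>s\<in>S. cle P z s) \<and> (\<forall>w. (\<forall>s\<in>S. cle P w s) \<longrightarrow> cle P w z)"

definition is_lub :: "'e::real_vector set \<Rightarrow> 'e set \<Rightarrow> 'e \<Rightarrow> bool" where
  "is_lub P S z \<longleftrightarrow> (\<forall>s\<in>S. cle P s z) \<and> (\<forall>w. (\<forall>s\<in>S. cle P s w) \<longrightarrow> cle P z w)"

definition cinf :: "'e::real_vector set \<Rightarrow> 'e set \<Rightarrow> 'e" where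
  "cinf P S = (THE z. is_glb P S z)"

definition csup :: "'e::real_vector set \<Rightarrow> 'e set \<Rightarrow> 'e" where
  "csup P S = (THE z. is_lub P S z)"

definition riesz :: "'e::real_vector set \<Rightarrow> bool" where
  "riesz P \<longleftrightarrow> (\<forall>x y. \<exists>z. is_glb P {x, y} z)"

definition sigma_order_complete :: "'e::real_vector set \<Rightarrow> bool" where
  "sigma_order_complete P \<longleftrightarrow>
     (\<forall>u::nat \<Rightarrow> 'e. (\<forall>n. cle P (u (Suc n)) (u n)) \<and> (\<exists>b. \<forall>n. cle P b (u n))
        \<longrightarrow> (\<exists>z. is_glb P (range u) z))"

definition cone_metric :: "'e::real_vector set \<Rightarrow> ('a \<Rightarrow> 'a \<Rightarrow> 'e) \<Rightarrow> bool" where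
  "cone_metric P d \<longleftrightarrow> (\<forall>x y. d x y = 0 \<longleftrightarrow> x = y)
     \<and> (\<forall>x y z. cle P (d x y) (d x z + d y z))"

definition cconv :: "'e::{real_vector,topological_space} set \<Rightarrow> ('a \<Rightarrow> 'a \<Rightarrow> 'e)
    \<Rightarrow> (nat \<Rightarrow> 'a) \<Rightarrow> 'a \<Rightarrow> bool" where
  "cconv P d s x \<longleftrightarrow> (\<forall>\<epsilon>. \<epsilon> \<in> interior P \<longrightarrow> (\<exists>N. \<forall>n\<ge>N. cll P (d (s n) x) \<epsilon>))"

definition ccauchy :: "'e::{real_vector,topological_space} set \<Rightarrow> ('a \<Rightarrow> 'a \<Rightarrow> 'e)
    \<Rightarrow> (nat \<Rightarrow> 'a) \<Rightarrow> bool" where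
  "ccauchy P d s \<longleftrightarrow> (\<forall>\<epsilon>. \<epsilon> \<in> interior P \<longrightarrow> (\<exists>N. \<forall>m\<ge>N. \<forall>n\<ge>N. cll P (d (s m) (s n)) \<epsilon>))"

definition ccomplete :: "'e::{real_vector,topological_space} set \<Rightarrow> ('a \<Rightarrow> 'a \<Rightarrow> 'e) \<Rightarrow> bool" where
  "ccomplete P d \<longleftrightarrow> (\<forall>s. ccauchy P d s \<longrightarrow> (\<exists>x. cconv P d s x))"

definition cclosed :: "'e::{real_vector,topological_space} set \<Rightarrow> ('a \<Rightarrow> 'a \<Rightarrow> 'e) \<Rightarrow> 'a set \<Rightarrow> bool" where
  "cclosed P d F \<longleftrightarrow> (\<forall>s x. (\<forall>n. s n \<in> F) \<and> cconv P d s x \<longrightarrow> x \<in> F)"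

definition lsc :: "'e::{real_vector,topological_space} set \<Rightarrow> ('a \<Rightarrow> 'a \<Rightarrow> 'e) \<Rightarrow> ('a \<Rightarrow> 'e) \<Rightarrow> bool" where
  "lsc P d \<phi> \<longleftrightarrow> (\<forall>\<alpha>. cclosed P d {x. cle P (\<phi> x) \<alpha>})"

definition LS :: "'e::{real_vector,topological_space} set \<Rightarrow> ('a \<Rightarrow> 'a \<Rightarrow> 'e) \<Rightarrow> ('a \<Rightarrow> 'e) set" where
  "LS P d = {\<phi>. lsc P d \<phi> \<and> (\<exists>b. \<forall>x. cle P b (\<phi> x))}"

definition Bset :: "'e::real_vector set \<Rightarrow> ('a \<Rightarrow> 'a \<Rightarrow> 'e) \<Rightarrow> 'a set set" where
  "Bset P d = {A. A \<noteq> {} \<and> (\<exists>c. \<forall>x\<in>A. \<forall>y\<in>A. cle P (d x y) c)}"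

definition dist_set :: "'e::real_vector set \<Rightarrow> ('a \<Rightarrow> 'a \<Rightarrow> 'e) \<Rightarrow> 'a \<Rightarrow> 'a set \<Rightarrow> 'e" where
  "dist_set P d x A = cinf P ((\<lambda>y. d x y) ` A)"

definition hausdorff :: "'e::real_vector set \<Rightarrow> ('a \<Rightarrow> 'a \<Rightarrow> 'e) \<Rightarrow> 'a set \<Rightarrow> 'a set \<Rightarrow> 'e" where
  "hausdorff P d A B = csup P {csup P ((\<lambda>x. dist_set P d x B) ` A),
                               csup P ((\<lambda>y. dist_set P d y A) ` B)}"

text \<open>The infima/suprema in H(A,B) are assumed to exist.\<close>
definition hausdorff_exists :: "'e::real_vector set \<Rightarrow> ('a \<Rightarrow> 'a \<Rightarrow> 'e) \<Rightarrow> 'a set \<Rightarrow> 'a set \<Rightarrow> bool" where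
  "hausdorff_exists P d A B \<longleftrightarrow>
     (\<exists>z. is_lub P ((\<lambda>x. dist_set P d x B) ` A) z)
   \<and> (\<exists>z. is_lub P ((\<lambda>y. dist_set P d y A) ` B) z)
   \<and> (\<exists>z. is_lub P {csup P ((\<lambda>x. dist_set P d x B) ` A), csup P ((\<lambda>y. dist_set P d y A) ` B)} z)"

definition positive_op :: "'e::real_vector set \<Rightarrow> ('e \<Rightarrow> 'e) \<Rightarrow> bool" where
  "positive_op P L \<longleftrightarrow> L ` P \<subseteq> P"

definition K_plus :: "'e::{real_vector,topological_space} set \<Rightarrow> ('e \<Rightarrow> 'e) set" where
  "K_plus P = {\<delta>. linear \<delta> \<and> positive_op P \<delta> \<and> inj \<delta> \<and> continuous_on UNIV \<delta>
     \<and> (\<exists>t::real. 0 \<le> t \<and> t < 1 \<and> (\<forall>x\<in>P. cle P 0 (\<delta> x) \<and> cle P (\<delta> x) (t *\<^sub>R x)))}"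

definition condition_S :: "'e::real_vector set \<Rightarrow> ('a \<Rightarrow> 'a \<Rightarrow> 'e) \<Rightarrow> ('a \<Rightarrow> 'a set) \<Rightarrow> bool" where
  "condition_S P d T \<longleftrightarrow> (\<forall>\<epsilon>::real. \<epsilon> > 0 \<longrightarrow>
     (\<exists>f. (\<forall>x. f x \<in> T x) \<and> (\<forall>x. cle P (d x (f x)) ((1 + \<epsilon>) *\<^sub>R dist_set P d x (T x)))))"

end

theory Submission
  imports Defs
begin

text \<open>Fix \<open>\<epsilon> > 0\<close> with \<open>s = t (1 + \<epsilon>) < 1\<close>, where \<open>t\<close> is the contraction constant of \<open>\<delta>\<close>, and
  iterate the selector \<open>f\<close> supplied by condition (S). For \<open>y \<in> T x\<close> the weak contraction
  gives \<open>d(y, Ty) \<preceq> H(Tx, Ty) \<preceq> \<delta> d(x, y)\<close>, since the \<open>L\<close>-term vanishes; hence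
  \<open>\<phi>(f x) \<preceq> s \<phi>(x)\<close> for \<open>\<phi>(x) = d(x, Tx)\<close>, and the orbit \<open>x\<^sub>n = f\<^sup>n x\<^sub>0\<close> has
  \<open>d(x\<^sub>n, x\<^sub>n\<^sub>+\<^sub>1) \<preceq> (1 + \<epsilon>) s\<^sup>n \<phi>(x\<^sub>0)\<close>. It is therefore Cauchy, and its limit \<open>x\<^sup>*\<close> satisfies
  \<open>\<phi>(x\<^sup>*) \<preceq> s\<^sup>N \<phi>(x\<^sub>0)\<close> for all \<open>N\<close> by lower semicontinuity. Because the cone is closed and
  scalar multiplication is continuous, \<open>\<phi>(x\<^sup>*) = 0\<close>, so \<open>d(x\<^sup>*, f x\<^sup>*) = 0\<close> and \<open>x\<^sup>* = f x\<^sup>* \<in> T x\<^sup>*\<close>.\<close>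

lemma cone_zero: "is_cone P \<Longrightarrow> 0 \<in> P"
  unfolding is_cone_def by blast

lemma cone_add: "is_cone P \<Longrightarrow> x \<in> P \<Longrightarrow> y \<in> P \<Longrightarrow> x + y \<in> P"
  unfolding is_cone_def by (metis order_refl scaleR_one zero_le_one)

lemma cone_scaleR: "is_cone P \<Longrightarrow> x \<in> P \<Longrightarrow> 0 \<le> r \<Longrightarrow> r *\<^sub>R x \<in> P"
  using cone_zero[of P] unfolding is_cone_def by (metis add.right_neutral)

lemma cone_antisym:
  assumes "is_cone P" "x \<in> P" "- x \<in> P"
  shows "x = 0"
proof -
  have "x \<in> uminus ` P" using assms(3) by (metis image_eqI minus_minus)
  with assms(1,2) show ?thesis unfolding is_cone_def by blast
qed

lemma cle_0_iff: "cle P 0 x \<longleftrightarrow> x \<in> P"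
  unfolding cle_def by simp

lemma cle_refl: "is_cone P \<Longrightarrow> cle P x x"
  unfolding cle_def using cone_zero by simp

lemma cle_trans: "is_cone P \<Longrightarrow> cle P x y \<Longrightarrow> cle P y z \<Longrightarrow> cle P x z"
  unfolding cle_def using cone_add[of P "z - y" "y - x"] by simp

lemma cle_antisym: "is_cone P \<Longrightarrow> cle P x y \<Longrightarrow> cle P y x \<Longrightarrow> x = y"
  unfolding cle_def using cone_antisym[of P "y - x"] by simp

lemma cle_add: "is_cone P \<Longrightarrow> cle P a b \<Longrightarrow> cle P c e \<Longrightarrow> cle P (a + c) (b + e)"
  unfolding cle_def using cone_add[of P "b - a" "e - c"] by (simp add: algebra_simps)

lemma cle_scaleR: "is_cone P \<Longrightarrow> 0 \<le> r \<Longrightarrow> cle P a b \<Longrightarrow> cle P (r *\<^sub>R a) (r *\<^sub>R b)"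
  unfolding cle_def using cone_scaleR[of P "b - a" r] by (simp add: scaleR_diff_right)

lemma cle_scaleR_left_mono: "is_cone P \<Longrightarrow> c \<in> P \<Longrightarrow> r \<le> r' \<Longrightarrow> cle P (r *\<^sub>R c) (r' *\<^sub>R c)"
  unfolding cle_def using cone_scaleR[of P c "r' - r"] by (simp add: scaleR_diff_left)

lemma positive_op_mono: "linear L \<Longrightarrow> positive_op P L \<Longrightarrow> cle P a b \<Longrightarrow> cle P (L a) (L b)"
  unfolding cle_def positive_op_def by (metis image_subset_iff linear_diff)

lemma cle_geometric_decay:
  assumes "is_cone P" "0 \<le> s" "\<And>n. cle P (u (Suc n)) (s *\<^sub>R u n)"
  shows "cle P (u n) ((s ^ n) *\<^sub>R u 0)"
proof (induction n)
  case 0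
  show ?case using cle_refl[OF assms(1)] by simp
next
  case (Suc n)
  note cle_trans[OF assms(1), trans]
  have "cle P (u (Suc n)) (s *\<^sub>R u n)" by (rule assms(3))
  also have "cle P \<dots> (s *\<^sub>R ((s ^ n) *\<^sub>R u 0))" using cle_scaleR[OF assms(1,2) Suc] .
  finally show ?case by simp
qed

lemma is_glb_unique: "is_cone P \<Longrightarrow> is_glb P S z \<Longrightarrow> is_glb P S z' \<Longrightarrow> z = z'"
  unfolding is_glb_def using cle_antisym by blast

lemma is_lub_unique: "is_cone P \<Longrightarrow> is_lub P S z \<Longrightarrow> is_lub P S z' \<Longrightarrow> z = z'"
  unfolding is_lub_def using cle_antisym by blast

lemma cinf_eqI: "is_cone P \<Longrightarrow> is_glb P S z \<Longrightarrow> cinf P S = z"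
  unfolding cinf_def using is_glb_unique by blast

lemma csup_eqI: "is_cone P \<Longrightarrow> is_lub P S z \<Longrightarrow> csup P S = z"
  unfolding csup_def using is_lub_unique by blast

lemma tvs_continuous_on_add:
  fixes f g :: "'b::topological_space \<Rightarrow> 'e::{real_vector,topological_space}"
  assumes "tvs TYPE('e)" "continuous_on UNIV f" "continuous_on UNIV g"
  shows "continuous_on UNIV (\<lambda>x. f x + g x)"
  using assms unfolding tvs_def
  by (intro continuous_on_compose2[where f="\<lambda>x. (f x, g x)" and g="\<lambda>p::'e\<times>'e. fst p + snd p", simplified])
     (auto intro: continuous_on_Pair)

lemma tvs_continuous_on_scaleR:
  fixes f :: "'b::topological_space \<Rightarrow> real" and g :: "'b \<Rightarrow> 'e::{real_vector,topological_space}"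
  assumes "tvs TYPE('e)" "continuous_on UNIV f" "continuous_on UNIV g"
  shows "continuous_on UNIV (\<lambda>x. f x *\<^sub>R g x)"
  using assms unfolding tvs_def
  by (intro continuous_on_compose2[where f="\<lambda>x. (f x, g x)" and g="\<lambda>p::real\<times>'e. fst p *\<^sub>R snd p", simplified])
     (auto intro: continuous_on_Pair)

lemma tvs_tendsto_add_scaleR:
  fixes a c :: "'e::{real_vector,topological_space}"
  assumes "tvs TYPE('e)" "(r \<longlongrightarrow> 0) F"
  shows "((\<lambda>n. a + r n *\<^sub>R c) \<longlongrightarrow> a) F"
proof -
  have "continuous_on UNIV (\<lambda>\<rho>::real. a + \<rho> *\<^sub>R c)"
    by (intro tvs_continuous_on_add tvs_continuous_on_scaleR assms(1) continuous_on_const continuous_on_id)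
  then have "isCont (\<lambda>\<rho>::real. a + \<rho> *\<^sub>R c) 0"
    by (simp add: continuous_on_eq_continuous_at)
  from isCont_tendsto_compose[OF this assms(2)] show ?thesis by simp
qed

lemma interior_cone_add:
  fixes P :: "'e::{real_vector,topological_space} set"
  assumes "tvs TYPE('e)" "is_cone P" "a \<in> interior P" "b \<in> P"
  shows "a + b \<in> interior P"
proof -
  define V where "V = (\<lambda>y. y + (- b)) -` interior P"
  have "continuous_on UNIV (\<lambda>y::'e. y + (- b))"
    by (intro tvs_continuous_on_add assms(1) continuous_on_const continuous_on_id)
  then have "open V"
    unfolding V_def using continuous_on_open_vimage[of UNIV] by auto
  moreover have "a + b \<in> V" unfolding V_def using assms(3) by simp
  moreover have "V \<subseteq> P"
  proof
    fix y assume "y \<in> V"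
    then have "y - b \<in> P" unfolding V_def using interior_subset by auto
    then show "y \<in> P" using cone_add[OF assms(2) _ assms(4)] by force
  qed
  ultimately show ?thesis by (meson interiorI)
qed

lemma eventually_cll_of_vanishing_bound:
  fixes P :: "'e::{real_vector,topological_space} set"
  assumes "tvs TYPE('e)" "is_cone P" "e \<in> interior P" "(r \<longlongrightarrow> 0) F"
  shows "\<forall>\<^sub>F n in F. \<forall>y. cle P y (r n *\<^sub>R c) \<longrightarrow> cll P y e"
proof -
  have "((\<lambda>n. - r n) \<longlongrightarrow> 0) F" using tendsto_minus[OF assms(4)] by simp
  from tvs_tendsto_add_scaleR[OF assms(1) this]
  have "((\<lambda>n. e - r n *\<^sub>R c) \<longlongrightarrow> e) F" by simp
  then have "\<forall>\<^sub>F n in F. e - r n *\<^sub>R c \<in> interior P"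
    by (rule topological_tendstoD[OF _ open_interior assms(3)])
  then show ?thesis
  proof (rule eventually_mono, intro allI impI)
    fix n y assume "e - r n *\<^sub>R c \<in> interior P" "cle P y (r n *\<^sub>R c)"
    from interior_cone_add[OF assms(1,2) this(1) this(2)[unfolded cle_def]]
    show "cll P y e" unfolding cll_def by simp
  qed
qed

lemma cle_zero_of_le_geometric:
  fixes P :: "'e::{real_vector,topological_space} set"
  assumes "tvs TYPE('e)" "is_cone P" "0 \<le> s" "s < 1" "\<And>n. cle P a ((s ^ n) *\<^sub>R c)"
  shows "cle P a 0"
proof -
  have "(\<lambda>n. s ^ n) \<longlonglongrightarrow> 0" using assms(3,4) by (intro LIMSEQ_power_zero) simp
  from tvs_tendsto_add_scaleR[OF assms(1) this]
  have "(\<lambda>n. - a + (s ^ n) *\<^sub>R c) \<longlonglongrightarrow> - a" .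
  moreover have "- a + (s ^ n) *\<^sub>R c \<in> P" for n using assms(5)[of n] unfolding cle_def by simp
  moreover have "closed P" using assms(2) unfolding is_cone_def by blast
  ultimately have "- a \<in> P" by (intro Lim_in_closed_set[of P]) auto
  then show ?thesis unfolding cle_def by simp
qed

locale cone_metric_space =
  fixes P :: "'e::{real_vector,topological_space} set" and d :: "'a \<Rightarrow> 'a \<Rightarrow> 'e"
  assumes cone: "is_cone P" and metric: "cone_metric P d"
begin

lemma d_eq_0_iff: "d x y = 0 \<longleftrightarrow> x = y"
  using metric unfolding cone_metric_def by blast

lemma d_self [simp]: "d x x = 0"
  using d_eq_0_iff by simp

lemma d_triangle_sym: "cle P (d x y) (d x z + d y z)"
  using metric unfolding cone_metric_def by blast

lemma d_sym: "d x y = d y x"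
  using cle_antisym[OF cone] d_triangle_sym[of x y x] d_triangle_sym[of y x y] by simp

lemma d_nonneg: "d x y \<in> P"
proof -
  have "(2::real) *\<^sub>R d x y \<in> P"
    using d_triangle_sym[of x x y] unfolding cle_def by (simp add: d_sym[of y x] scaleR_2)
  from cone_scaleR[OF cone this, of "1/2"] show ?thesis by simp
qed

lemma d_triangle: "cle P (d x z) (d x y + d y z)"
  using d_triangle_sym[of x z y] d_sym[of z y] by simp

lemma d_le_0_imp_eq: "cle P (d x y) 0 \<Longrightarrow> x = y"
  using cle_antisym[OF cone] d_nonneg[unfolded cle_0_iff[symmetric]] d_eq_0_iff by blast

lemma d_le_geometric_sum:
  assumes "\<And>n. cle P (d (x n) (x (Suc n))) ((s ^ n) *\<^sub>R c)"
  shows "cle P (d (x m) (x (m + k))) ((\<Sum>i<k. s ^ (m + i)) *\<^sub>R c)"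
proof (induction k)
  case 0
  show ?case using cle_refl[OF cone] by simp
next
  case (Suc k)
  note cle_trans[OF cone, trans]
  have "cle P (d (x m) (x (m + Suc k))) (d (x m) (x (m + k)) + d (x (m + k)) (x (Suc (m + k))))"
    using d_triangle by simp
  also have "cle P \<dots> ((\<Sum>i<k. s ^ (m + i)) *\<^sub>R c + (s ^ (m + k)) *\<^sub>R c)"
    using cle_add[OF cone Suc assms] .
  finally show ?case by (simp add: scaleR_add_left)
qed

lemma d_le_geometric_tail:
  assumes "c \<in> P" "0 \<le> s" "s < 1" "\<And>n. cle P (d (x n) (x (Suc n))) ((s ^ n) *\<^sub>R c)"
    and "N \<le> m" "N \<le> n"
  shows "cle P (d (x m) (x n)) ((s ^ N / (1 - s)) *\<^sub>R c)"
proof -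
  have ordered: "cle P (d (x m) (x n)) ((s ^ N / (1 - s)) *\<^sub>R c)" if "N \<le> m" "m \<le> n" for m n
  proof -
    have "(\<Sum>i<n - m. s ^ (m + i)) = s ^ m * (1 - s ^ (n - m)) / (1 - s)"
      using assms(3) by (simp add: power_add sum_distrib_left[symmetric] sum_gp_strict)
    also have "\<dots> \<le> s ^ m / (1 - s)"
      using assms(2,3) by (simp add: divide_right_mono mult_left_le)
    also have "\<dots> \<le> s ^ N / (1 - s)"
      using assms(2,3) \<open>N \<le> m\<close> by (simp add: divide_right_mono power_decreasing)
    finally have "cle P ((\<Sum>i<n - m. s ^ (m + i)) *\<^sub>R c) ((s ^ N / (1 - s)) *\<^sub>R c)"
      by (rule cle_scaleR_left_mono[OF cone assms(1)])
    with d_le_geometric_sum[OF assms(4), of m "n - m"] \<open>m \<le> n\<close> show ?thesis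
      using cle_trans[OF cone] by simp
  qed
  show ?thesis
    using ordered[of m n] ordered[of n m] assms(5,6) d_sym[of "x m" "x n"] by (cases "m \<le> n") auto
qed

lemma ccauchy_of_geometric:
  assumes "tvs TYPE('e)" "c \<in> P" "0 \<le> s" "s < 1"
    and "\<And>n. cle P (d (x n) (x (Suc n))) ((s ^ n) *\<^sub>R c)"
  shows "ccauchy P d x"
  unfolding ccauchy_def
proof (intro allI impI)
  fix e assume "e \<in> interior P"
  have "(\<lambda>N. s ^ N / (1 - s)) \<longlonglongrightarrow> 0"
    using assms(3,4) by (intro tendsto_divide_zero LIMSEQ_power_zero) simp
  from eventually_cll_of_vanishing_bound[OF assms(1) cone \<open>e \<in> interior P\<close> this]
  obtain N where "\<forall>y. cle P y ((s ^ N / (1 - s)) *\<^sub>R c) \<longrightarrow> cll P y e"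
    unfolding eventually_sequentially by blast
  with d_le_geometric_tail[OF assms(2-5)]
  show "\<exists>N. \<forall>m\<ge>N. \<forall>n\<ge>N. cll P (d (x m) (x n)) e" by blast
qed

lemma cconv_shift: "cconv P d x l \<Longrightarrow> cconv P d (\<lambda>n. x (n + k)) l"
  unfolding cconv_def by (meson le_add1 order_trans)

lemma lsc_le_of_cconv:
  assumes "lsc P d \<phi>" "cconv P d x l" "\<And>n. cle P (\<phi> (x n)) \<alpha>"
  shows "cle P (\<phi> l) \<alpha>"
  using assms unfolding lsc_def cclosed_def by blast

lemma dist_set_is_glb: "\<exists>z. is_glb P (d x ` A) z \<Longrightarrow> is_glb P (d x ` A) (dist_set P d x A)"
  unfolding dist_set_def using cinf_eqI[OF cone] by blast

lemma dist_set_nonneg: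
  assumes "\<exists>z. is_glb P (d x ` A) z"
  shows "dist_set P d x A \<in> P"
  using dist_set_is_glb[OF assms] d_nonneg unfolding is_glb_def cle_0_iff[symmetric] by blast

lemma dist_set_of_mem:
  assumes "a \<in> A"
  shows "dist_set P d a A = 0"
proof -
  have "is_glb P (d a ` A) 0"
    unfolding is_glb_def using assms d_nonneg by (auto simp: cle_0_iff)
  then show ?thesis unfolding dist_set_def by (rule cinf_eqI[OF cone])
qed

lemma dist_set_le_hausdorff:
  assumes "hausdorff_exists P d A B" "a \<in> A"
  shows "cle P (dist_set P d a B) (hausdorff P d A B)"
proof -
  obtain z1 z3 where z1: "is_lub P ((\<lambda>x. dist_set P d x B) ` A) z1"
    and z3: "is_lub P {csup P ((\<lambda>x. dist_set P d x B) ` A), csup P ((\<lambda>y. dist_set P d y A) ` B)} z3"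
    using assms(1) unfolding hausdorff_exists_def by blast
  have "hausdorff P d A B = z3" unfolding hausdorff_def using csup_eqI[OF cone z3] .
  moreover have "cle P (dist_set P d a B) z1" using z1 assms(2) unfolding is_lub_def by blast
  moreover have "cle P z1 z3" using z3 csup_eqI[OF cone z1] unfolding is_lub_def by auto
  ultimately show ?thesis using cle_trans[OF cone] by metis
qed

lemma weak_contraction_dist_set_le:
  assumes "hausdorff_exists P d A B" "cle P (hausdorff P d A B) (\<delta> (d x y) + L (dist_set P d y A))"
    and "linear L" "y \<in> A"
  shows "cle P (dist_set P d y B) (\<delta> (d x y))"
  using cle_trans[OF cone dist_set_le_hausdorff[OF assms(1,4)] assms(2)]
  by (simp add: dist_set_of_mem[OF assms(4)] linear_0[OF assms(3)])

lemma fixed_point_of_contracting_selector: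
  assumes "tvs TYPE('e)" "ccomplete P d" "lsc P d \<phi>" "\<And>y. \<phi> y \<in> P"
    and "0 \<le> k" "0 \<le> s" "s < 1"
    and step: "\<And>y. cle P (d y (f y)) (k *\<^sub>R \<phi> y)"
    and contract: "\<And>y. cle P (\<phi> (f y)) (s *\<^sub>R \<phi> y)"
  shows "\<exists>l. f l = l"
proof -
  note cle_trans[OF cone, trans]
  fix x\<^sub>0
  define x where "x n = (f ^^ n) x\<^sub>0" for n
  have x_Suc: "x (Suc n) = f (x n)" for n unfolding x_def by simp
  have orbit: "cle P (\<phi> (x n)) ((s ^ n) *\<^sub>R \<phi> x\<^sub>0)" for n
    using cle_geometric_decay[OF cone assms(6), of "\<lambda>n. \<phi> (x n)"] contract x_Suc
    by (simp add: x_def)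
  have "cle P (d (x n) (x (Suc n))) ((s ^ n) *\<^sub>R (k *\<^sub>R \<phi> x\<^sub>0))" for n
  proof -
    have "cle P (d (x n) (x (Suc n))) (k *\<^sub>R \<phi> (x n))" using step x_Suc by simp
    also have "cle P \<dots> (k *\<^sub>R ((s ^ n) *\<^sub>R \<phi> x\<^sub>0))" using cle_scaleR[OF cone assms(5) orbit] .
    finally show ?thesis by (simp add: mult.commute)
  qed
  with ccauchy_of_geometric[OF assms(1) _ assms(6,7)] cone_scaleR[OF cone assms(4,5)]
  obtain l where conv: "cconv P d x l"
    using assms(2) unfolding ccomplete_def by blast
  have "cle P (\<phi> l) ((s ^ N) *\<^sub>R \<phi> x\<^sub>0)" for N
  proof (rule lsc_le_of_cconv[OF assms(3) cconv_shift[OF conv, of N]])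
    fix n
    have "s ^ (n + N) \<le> s ^ N" using assms(6,7) by (simp add: power_decreasing)
    then show "cle P (\<phi> (x (n + N))) ((s ^ N) *\<^sub>R \<phi> x\<^sub>0)"
      using orbit[of "n + N"] cle_scaleR_left_mono[OF cone assms(4)] cle_trans[OF cone] by blast
  qed
  then have "cle P (\<phi> l) 0" by (rule cle_zero_of_le_geometric[OF assms(1) cone assms(6,7)])
  from cle_trans[OF cone step cle_scaleR[OF cone assms(5) this]]
  have "f l = l" using d_le_0_imp_eq by (simp add: eq_commute)
  then show ?thesis ..
qed

end

theorem theorem4:
  fixes P :: "'e::{real_vector,topological_space} set"
    and d :: "'a \<Rightarrow> 'a \<Rightarrow> 'e"
    and T :: "'a \<Rightarrow> 'a set"
    and L \<delta> :: "'e \<Rightarrow> 'e"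
  assumes "tvs TYPE('e)"
    and "is_cone P"
    and "riesz P"
    and "sigma_order_complete P"
    and "cone_metric P d"
    and "ccomplete P d"
    and "linear L" and "positive_op P L"
    and "\<delta> \<in> K_plus P"
    and "\<forall>x. T x \<in> Bset P d"
    and "\<forall>x y. \<exists>z. is_glb P ((\<lambda>z. d x z) ` T y) z"
    and "\<forall>x y. hausdorff_exists P d (T x) (T y)"
    and "\<forall>x y. cle P (hausdorff P d (T x) (T y)) (\<delta> (d x y) + L (dist_set P d y (T x)))"
    and "condition_S P d T"
    and "(\<lambda>x. dist_set P d x (T x)) \<in> LS P d"
  shows "\<exists>x. x \<in> T x"
proof -
  interpret cone_metric_space P d using assms(2,5) by unfold_locales
  note cle_trans[OF assms(2), trans]
  obtain t where t: "0 \<le> t" "t < 1" "\<forall>x\<in>P. cle P (\<delta> x) (t *\<^sub>R x)"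
    and \<delta>: "linear \<delta>" "positive_op P \<delta>"
    using assms(9) unfolding K_plus_def by blast
  define \<epsilon> where "\<epsilon> = (1 - t) / 2"
  have \<epsilon>: "0 < \<epsilon>" "t * (1 + \<epsilon>) < 1"
    using t(1,2) mult_left_le_one_le[of \<epsilon> t] by (auto simp: \<epsilon>_def field_simps)
  obtain f where f: "\<And>x. f x \<in> T x" "\<And>x. cle P (d x (f x)) ((1 + \<epsilon>) *\<^sub>R dist_set P d x (T x))"
    using assms(14) \<epsilon>(1) unfolding condition_S_def by blast
  define \<phi> where "\<phi> y = dist_set P d y (T y)" for y
  have \<phi>_nonneg: "\<phi> y \<in> P" for y
    unfolding \<phi>_def using dist_set_nonneg assms(11) by blast
  have "cle P (\<phi> (f y)) ((t * (1 + \<epsilon>)) *\<^sub>R \<phi> y)" for y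
  proof -
    have "cle P (\<phi> (f y)) (\<delta> (d y (f y)))"
      unfolding \<phi>_def using weak_contraction_dist_set_le assms(7,12,13) f(1) by blast
    also have "cle P \<dots> (\<delta> ((1 + \<epsilon>) *\<^sub>R \<phi> y))"
      unfolding \<phi>_def using positive_op_mono[OF \<delta> f(2)] .
    also have "cle P \<dots> (t *\<^sub>R ((1 + \<epsilon>) *\<^sub>R \<phi> y))"
      using t(3) cone_scaleR[OF assms(2) \<phi>_nonneg, of "1 + \<epsilon>"] \<epsilon>(1) by (meson less_eq_real_def add_pos_pos zero_less_one)
    finally show ?thesis by simp
  qed
  moreover have "lsc P d \<phi>" using assms(15) unfolding LS_def \<phi>_def by auto
  ultimately obtain l where "f l = l"
    using fixed_point_of_contracting_selector[OF assms(1,6), of \<phi> "1 + \<epsilon>" "t * (1 + \<epsilon>)" f]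
      \<phi>_nonneg f(2) \<epsilon> t(1) unfolding \<phi>_def by auto
  then show ?thesis using f(1) by metis
qed

end
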